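(* Let $W$ be an irreducible finite reflection group, $R:W\to\mathrm{GL}(V_R)$ a reflection representation and $\eta\in\mathrm{Hom}(W,\{\pm1\})$. Then the restriction $(R\otimes\eta)_{\mathcal H'}:\mathcal H'\to\mathfrak{sl}(V_R)$ is surjective.
   Context: $W\subset\mathrm{GL}(V)$ is an irreducible finite group generated by reflections (elements of order 2 of $\mathrm{GL}(V)$ fixing a hyperplane, $V$ a finite-dimensional complex vector space), $\mathcal R$ its set of reflections. $\mathcal H$ is the Lie subalgebra of $\mathbb CW$ (bracket $xy-yx$) generated by $\mathcal R$, $\mathcal H'$ its derived algebra. A reflection representation is an irreducible $R:W\to\mathrm{GL}(V_R)$ with $\dim V_R\ge2$ such that for every $s\in\mathcal R$, $R(s)$ is either $\mathrm{Id}$ or a reflection of $V_R$. *)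

theory Defs
  imports "HOL-Analysis.Analysis"
begin

type_synonym ('n) cmat = "complex^('n::finite)^'n"

definition csubspace :: "(complex^'n) set \<Rightarrow> bool" where
  "csubspace U \<longleftrightarrow> 0 \<in> U \<and> (\<forall>u\<in>U. \<forall>v\<in>U. u + v \<in> U) \<and> (\<forall>c. \<forall>u\<in>U. c *s u \<in> U)"

definition chyperplane :: "(complex^'n) set \<Rightarrow> bool" where
  "chyperplane H \<longleftrightarrow> (\<exists>a::complex^'n. a \<noteq> 0 \<and> H = {v. (\<Sum>i\<in>UNIV. a $ i * v $ i) = 0})"

definition is_reflection :: "('n::finite) cmat \<Rightarrow> bool" where
  "is_reflection s \<longleftrightarrow> s ** s = mat 1 \<and> s \<noteq> mat 1 \<and>
     (\<exists>H. chyperplane H \<and> (\<forall>v\<in>H. s *v v = v))"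

definition reflections :: "('n::finite) cmat set \<Rightarrow> ('n::finite) cmat set" where
  "reflections W = {s \<in> W. is_reflection s}"

text \<open>Group generated by a set of involutions (products of generators).\<close>
inductive_set gen_by :: "('n::finite) cmat set \<Rightarrow> ('n::finite) cmat set" for S where
  gen_one: "mat 1 \<in> gen_by S"
| gen_mult: "s \<in> S \<Longrightarrow> x \<in> gen_by S \<Longrightarrow> s ** x \<in> gen_by S"

definition matrix_group :: "('n::finite) cmat set \<Rightarrow> bool" where
  "matrix_group W \<longleftrightarrow> mat 1 \<in> W \<and> (\<forall>u\<in>W. \<forall>v\<in>W. u ** v \<in> W) \<and>
     (\<forall>u\<in>W. \<exists>v\<in>W. u ** v = mat 1 \<and> v ** u = mat 1)"

definition irreducible_on :: "('n::finite) cmat set \<Rightarrow> bool" where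
  "irreducible_on G \<longleftrightarrow> (\<forall>U. csubspace U \<and> (\<forall>g\<in>G. \<forall>u\<in>U. g *v u \<in> U) \<longrightarrow> U = {0} \<or> U = UNIV)"

definition irreducible_reflection_group :: "('n::finite) cmat set \<Rightarrow> bool" where
  "irreducible_reflection_group W \<longleftrightarrow> finite W \<and> matrix_group W \<and>
     W = gen_by (reflections W) \<and> irreducible_on W"

definition representation :: "('n::finite) cmat set \<Rightarrow> (('n::finite) cmat \<Rightarrow> ('m::finite) cmat) \<Rightarrow> bool" where
  "representation W R \<longleftrightarrow> (\<forall>w\<in>W. invertible (R w)) \<and> (\<forall>u\<in>W. \<forall>v\<in>W. R (u ** v) = R u ** R v)"

definition reflection_representation :: "('n::finite) cmat set \<Rightarrow> (('n::finite) cmat \<Rightarrow> ('m::finite) cmat) \<Rightarrow> bool" where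
  "reflection_representation W R \<longleftrightarrow> representation W R \<and> irreducible_on (R ` W) \<and>
     CARD('m) \<ge> 2 \<and> (\<forall>s\<in>reflections W. R s = mat 1 \<or> is_reflection (R s))"

definition sign_char :: "('n::finite) cmat set \<Rightarrow> (('n::finite) cmat \<Rightarrow> complex) \<Rightarrow> bool" where
  "sign_char W \<eta> \<longleftrightarrow> (\<forall>w\<in>W. \<eta> w = 1 \<or> \<eta> w = -1) \<and> (\<forall>u\<in>W. \<forall>v\<in>W. \<eta> (u ** v) = \<eta> u * \<eta> v)"

text \<open>Group algebra CW: functions W \<rightarrow> complex (supported on W), convolution product.\<close>
definition galg :: "('n::finite) cmat set \<Rightarrow> (('n::finite) cmat \<Rightarrow> complex) set" where
  "galg W = {f. \<forall>w. w \<notin> W \<longrightarrow> f w = 0}"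

definition gmult :: "('n::finite) cmat set \<Rightarrow> (('n::finite) cmat \<Rightarrow> complex) \<Rightarrow> (('n::finite) cmat \<Rightarrow> complex) \<Rightarrow> (('n::finite) cmat \<Rightarrow> complex)" where
  "gmult W f g = (\<lambda>w. if w \<in> W then (\<Sum>u\<in>W. \<Sum>v\<in>W. if u ** v = w then f u * g v else 0) else 0)"

definition gbracket :: "('n::finite) cmat set \<Rightarrow> (('n::finite) cmat \<Rightarrow> complex) \<Rightarrow> (('n::finite) cmat \<Rightarrow> complex) \<Rightarrow> (('n::finite) cmat \<Rightarrow> complex)" where
  "gbracket W f g = (\<lambda>w. gmult W f g w - gmult W g f w)"

definition delta :: "('n::finite) cmat \<Rightarrow> (('n::finite) cmat \<Rightarrow> complex)" where
  "delta s = (\<lambda>w. if w = s then 1 else 0)"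

inductive_set lie_H :: "('n::finite) cmat set \<Rightarrow> (('n::finite) cmat \<Rightarrow> complex) set" for W where
  H_gen: "s \<in> reflections W \<Longrightarrow> delta s \<in> lie_H W"
| H_zero: "(\<lambda>w. 0) \<in> lie_H W"
| H_add: "x \<in> lie_H W \<Longrightarrow> y \<in> lie_H W \<Longrightarrow> (\<lambda>w. x w + y w) \<in> lie_H W"
| H_smult: "x \<in> lie_H W \<Longrightarrow> (\<lambda>w. c * x w) \<in> lie_H W"
| H_bracket: "x \<in> lie_H W \<Longrightarrow> y \<in> lie_H W \<Longrightarrow> gbracket W x y \<in> lie_H W"

inductive_set lie_H' :: "('n::finite) cmat set \<Rightarrow> (('n::finite) cmat \<Rightarrow> complex) set" for W where
  H'_bracket: "x \<in> lie_H W \<Longrightarrow> y \<in> lie_H W \<Longrightarrow> gbracket W x y \<in> lie_H' W"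
| H'_zero: "(\<lambda>w. 0) \<in> lie_H' W"
| H'_add: "x \<in> lie_H' W \<Longrightarrow> y \<in> lie_H' W \<Longrightarrow> (\<lambda>w. x w + y w) \<in> lie_H' W"
| H'_smult: "x \<in> lie_H' W \<Longrightarrow> (\<lambda>w. c * x w) \<in> lie_H' W"

text \<open>Linear extension to CW of the representation R \<otimes> \<eta>, w \<mapsto> \<eta>(w) R(w).\<close>
definition tensor_ext :: "('n::finite) cmat set \<Rightarrow> (('n::finite) cmat \<Rightarrow> ('m::finite) cmat) \<Rightarrow> (('n::finite) cmat \<Rightarrow> complex)
    \<Rightarrow> (('n::finite) cmat \<Rightarrow> complex) \<Rightarrow> ('m::finite) cmat" where
  "tensor_ext W R \<eta> f = (\<Sum>w\<in>W. (\<chi> i j. f w * \<eta> w * R w $ i $ j))"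

definition sl :: "('m::finite) cmat set" where
  "sl = {A. trace A = 0}"

end

theory Submission
  imports Defs
begin

(*
  For the reflections s with R s \<noteq> 1 write R s = 1 - 2 p_s with p_s = v_s \<phi>_s^T a rank-one
  idempotent.  Since (R \<otimes> \<eta>)(s) = \<eta>(s) (1 - 2 p_s), the image K of H' is a subspace of sl(V_R)
  that is stable under ad p_s and contains every [p_s, p_t]; it equals sl(V_R) as soon as every Y
  orthogonal to K for the trace form is scalar.  Such a Y stays orthogonal under ad p_s, hence so do
  its rank-one compressions p_s Y (1 - p_s) = v_s \<psi>^T and (1 - p_s) Y p_s = w \<phi>_s^T.  Pairing
  them with the brackets [p_s, p_t] spreads this orthogonality from s to every t with
  \<phi>_t(v_s) \<noteq> 0 (resp. \<phi>_s(v_t) \<noteq> 0), and irreducibility of V_R under the p_s makes it spread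
  far enough to force \<psi> = 0 and w = 0.  So Y commutes with every p_s and is scalar by Schur's lemma.
*)

section \<open>Rank-one matrices and the trace form\<close>

definition cdot :: "complex^'m \<Rightarrow> complex^'m \<Rightarrow> complex" where
  "cdot a x = (\<Sum>i\<in>UNIV. a$i * x$i)"

definition outer :: "complex^'m \<Rightarrow> complex^'m \<Rightarrow> complex^'m^'m" where
  "outer v a = (\<chi> i j. v$i * a$j)"

definition cscale :: "complex \<Rightarrow> complex^'m^'m \<Rightarrow> complex^'m^'m" where
  "cscale c A = (\<chi> i j. c * A$i$j)"

definition mbracket :: "complex^'m^'m \<Rightarrow> complex^'m^'m \<Rightarrow> complex^'m^'m" where
  "mbracket A B = A ** B - B ** A"

definition cmat_subspace :: "(complex^'m^'m) set \<Rightarrow> bool" where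
  "cmat_subspace K \<longleftrightarrow> 0 \<in> K \<and> (\<forall>X\<in>K. \<forall>Y\<in>K. X + Y \<in> K) \<and> (\<forall>c. \<forall>X\<in>K. cscale c X \<in> K)"

definition trace_annihilator :: "(complex^'m^'m) set \<Rightarrow> (complex^'m^'m) set" where
  "trace_annihilator K = {Y. \<forall>X\<in>K. trace (Y ** X) = 0}"

lemma cscale_component [simp]: "cscale c A $ i $ j = c * A$i$j"
  by (simp add: cscale_def)

lemma outer_component [simp]: "outer v a $ i $ j = v$i * a$j"
  by (simp add: outer_def)

lemma matrix_matrix_mult_component: "(A ** B) $ i $ j = (\<Sum>k\<in>UNIV. A$i$k * B$k$j)"
  by (simp add: matrix_matrix_mult_def)

lemma outer_mult_outer: "outer u a ** outer v b = cscale (cdot a v) (outer u b)"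
  by (simp add: vec_eq_iff matrix_matrix_mult_component cdot_def sum_distrib_left sum_distrib_right
      mult_ac)

lemma cscale_cscale [simp]: "cscale a (cscale b A) = cscale (a * b) A"
  by (simp add: vec_eq_iff)

lemma cscale_one [simp]: "cscale 1 A = A"
  by (simp add: vec_eq_iff)

lemma cscale_left_zero [simp]: "cscale 0 A = 0"
  by (simp add: vec_eq_iff)

lemma cscale_mult_left: "cscale c A ** B = cscale c (A ** B)"
  by (simp add: vec_eq_iff matrix_matrix_mult_component sum_distrib_left algebra_simps)

lemma cscale_mult_right: "A ** cscale c B = cscale c (A ** B)"
  by (simp add: vec_eq_iff matrix_matrix_mult_component sum_distrib_left algebra_simps)

lemma cscale_matrix_vector_mult: "cscale c A *v x = c *s (A *v x)"
  by (simp add: vec_eq_iff matrix_vector_mult_def sum_distrib_left algebra_simps)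

lemma mat_matrix_vector_mult: "mat c *v (x::complex^'m) = c *s x"
  by (simp add: vec_eq_iff matrix_vector_mult_def mat_def if_distrib[of "\<lambda>y. y * _"] cong: if_cong)

lemma trace_cscale: "trace (cscale c A) = c * trace A"
  by (simp add: trace_def sum_distrib_left)

lemma matrix_mult_diff_left: "(A::complex^'m^'m) ** (B - C) = A ** B - A ** C"
  by (simp add: vec_eq_iff matrix_matrix_mult_component algebra_simps sum_subtractf)

lemma matrix_mult_diff_right: "((A::complex^'m^'m) - B) ** C = A ** C - B ** C"
  by (simp add: vec_eq_iff matrix_matrix_mult_component algebra_simps sum_subtractf)

lemma matrix_mult_add_right: "((A::complex^'m^'m) + B) ** C = A ** C + B ** C"
  by (simp add: vec_eq_iff matrix_matrix_mult_component algebra_simps sum.distrib)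

lemma trace_uminus: "trace (- A) = - trace (A::complex^'m^'m)"
  by (simp add: trace_def sum_negf)

lemma cscale_cancel:
  assumes "cmat_subspace K" and "cscale c A \<in> K" and "c \<noteq> 0"
  shows "A \<in> K"
proof -
  have "cscale (inverse c) (cscale c A) \<in> K"
    using assms(1,2) unfolding cmat_subspace_def by blast
  then show ?thesis
    using assms(3) by simp
qed

lemma cmat_subspace_diff:
  assumes "cmat_subspace K" "X \<in> K" "Y \<in> K"
  shows "X - Y \<in> K"
proof -
  have "X + cscale (-1) Y \<in> K"
    using assms by (simp add: cmat_subspace_def)
  moreover have "X + cscale (-1) Y = X - Y"
    by (simp add: vec_eq_iff)
  ultimately show ?thesis
    by simp
qed

lemma cmat_subspace_trace_annihilator: "cmat_subspace (trace_annihilator K)"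
  by (simp add: cmat_subspace_def trace_annihilator_def matrix_mult_add_right trace_add
      cscale_mult_left trace_cscale) (simp add: trace_def)

lemma trace_mbracket: "trace (mbracket A B) = 0"
  by (simp add: mbracket_def trace_sub trace_mul_sym[of A B])

lemma mbracket_scaled_reflection_left:
  "mbracket (cscale e (mat 1 - cscale 2 A)) X = cscale (-2 * e) (mbracket A X)"
  by (simp add: mbracket_def cscale_mult_left cscale_mult_right matrix_mult_diff_left
      matrix_mult_diff_right) (simp add: vec_eq_iff algebra_simps)

lemma mbracket_scaled_reflection_right:
  "mbracket X (cscale e (mat 1 - cscale 2 A)) = cscale (-2 * e) (mbracket X A)"
  by (simp add: mbracket_def cscale_mult_left cscale_mult_right matrix_mult_diff_left
      matrix_mult_diff_right) (simp add: vec_eq_iff algebra_simps)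

lemma cdot_add_right: "cdot a (x + y) = cdot a x + cdot a y"
  by (simp add: cdot_def algebra_simps sum.distrib)

lemma cdot_diff_right: "cdot a (x - y) = cdot a x - cdot a y"
  by (simp add: cdot_def algebra_simps sum_subtractf)

lemma cdot_diff_left: "cdot (a - b) x = cdot a x - cdot b x"
  by (simp add: cdot_def algebra_simps sum_subtractf)

lemma cdot_scale_right: "cdot a (c *s x) = c * cdot a x"
  by (simp add: cdot_def algebra_simps sum_distrib_left)

lemma cdot_scale_left: "cdot (c *s a) x = c * cdot a x"
  by (simp add: cdot_def algebra_simps sum_distrib_left)

lemma cdot_zero_right [simp]: "cdot a 0 = 0"
  by (simp add: cdot_def)

lemma cdot_vector_matrix_mult: "cdot (a v* M) x = cdot a (M *v x)"
proof -
  have "cdot (a v* M) x = (\<Sum>j\<in>UNIV. \<Sum>i\<in>UNIV. a$i * M$i$j * x$j)"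
    by (simp add: cdot_def vector_matrix_mult_def sum_distrib_right)
  also have "\<dots> = (\<Sum>i\<in>UNIV. \<Sum>j\<in>UNIV. a$i * M$i$j * x$j)"
    by (rule sum.swap)
  also have "\<dots> = cdot a (M *v x)"
    by (simp add: cdot_def matrix_vector_mult_def sum_distrib_left mult.assoc)
  finally show ?thesis .
qed

lemma cdot_axis: "cdot a (axis k c) = a$k * c"
  by (simp add: cdot_def axis_def mult.commute[of "a $ _"] if_distrib[of "\<lambda>x. x * _"] cong: if_cong)

lemma cdot_left_eq_zero: "(\<And>x. cdot a x = 0) \<Longrightarrow> a = 0"
  by (metis cdot_axis mult_1_right vec_eq_iff zero_index)

lemma outer_matrix_vector_mult: "outer v a *v x = cdot a x *s v"
  by (simp add: vec_eq_iff matrix_vector_mult_def cdot_def sum_distrib_left algebra_simps)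

lemma outer_mult_matrix: "outer v a ** M = outer v (a v* M)"
  by (simp add: vec_eq_iff matrix_matrix_mult_component vector_matrix_mult_def
      sum_distrib_left algebra_simps)

lemma matrix_mult_outer: "M ** outer v a = outer (M *v v) a"
  by (simp add: vec_eq_iff matrix_matrix_mult_component matrix_vector_mult_def
      sum_distrib_right mult.assoc)

lemma trace_outer: "trace (outer v a) = cdot a v"
  by (simp add: trace_def cdot_def mult.commute)

lemma outer_diff_left: "outer (v - w) a = outer v a - outer w a"
  by (simp add: vec_eq_iff algebra_simps)

lemma outer_diff_right: "outer v (a - b) = outer v a - outer v b"
  by (simp add: vec_eq_iff algebra_simps)

lemma outer_scale_left: "outer (c *s v) a = cscale c (outer v a)"
  by (simp add: vec_eq_iff algebra_simps)

lemma outer_scale_right: "outer v (c *s a) = cscale c (outer v a)"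
  by (simp add: vec_eq_iff algebra_simps)

lemma cscale_of_real: "r *\<^sub>R X = cscale (complex_of_real r) X"
  by (simp add: vec_eq_iff) (simp add: scaleR_conv_of_real)

lemma conj_transpose_trace_annihilator:
  fixes z :: "complex^'m^'m"
  assumes K: "cmat_subspace K" and z: "\<And>X. X \<in> K \<Longrightarrow> inner z X = 0"
  shows "(\<chi> a b. cnj (z$b$a)) \<in> trace_annihilator K"
  unfolding trace_annihilator_def
proof (intro CollectI ballI)
  fix X assume X: "X \<in> K"
  define S where "S = (\<Sum>a\<in>UNIV. \<Sum>b\<in>UNIV. cnj (z$a$b) * X$a$b)"
  have "trace ((\<chi> a b. cnj (z$b$a)) ** X) = (\<Sum>a\<in>UNIV. \<Sum>b\<in>UNIV. cnj (z$b$a) * X$b$a)"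
    by (simp add: trace_def matrix_matrix_mult_component)
  also have "\<dots> = S"
    unfolding S_def by (rule sum.swap)
  finally have trace_S: "trace ((\<chi> a b. cnj (z$b$a)) ** X) = S" .
  \<comment> \<open>the real inner product only sees Re S, but K is also closed under multiplication by i\<close>
  have "cscale \<i> X \<in> K"
    using K X by (simp add: cmat_subspace_def)
  moreover have "inner z X = Re S"
    by (simp add: inner_vec_def inner_complex_def S_def Re_sum)
  moreover have "inner z (cscale \<i> X) = - Im S"
    by (simp add: inner_vec_def inner_complex_def S_def Re_sum Im_sum)
      (simp add: sum_negf[symmetric])
  ultimately have "S = 0"
    using X z by (simp add: complex_eq_iff)
  then show "trace ((\<chi> a b. cnj (z$b$a)) ** X) = 0"
    using trace_S by simp
qed

lemma cmat_subspace_eq_sl: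
  fixes K :: "(complex^'m^'m) set"
  assumes K: "cmat_subspace K" and K_sl: "K \<subseteq> sl"
    and scalar: "\<And>Y. Y \<in> trace_annihilator K \<Longrightarrow> \<exists>l. Y = mat l"
  shows "K = sl"
proof
  show "sl \<subseteq> K"
  proof
    fix X0 :: "complex^'m^'m" assume X0: "X0 \<in> sl"
    have "subspace K"
      using K unfolding subspace_def cmat_subspace_def by (simp add: cscale_of_real)
    moreover obtain k z where "k \<in> span K" and z: "\<And>w. w \<in> span K \<Longrightarrow> orthogonal z w"
      and X0_eq: "X0 = k + z"
      by (rule orthogonal_subspace_decomp_exists[of K X0]) blast
    ultimately have k: "k \<in> K"
      by (metis span_eq_iff)
    have "\<And>X. X \<in> K \<Longrightarrow> inner z X = 0"
      using z span_base by (auto simp: orthogonal_def)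
    then obtain l where l: "(\<chi> a b. cnj (z$b$a)) = mat l"
      using scalar conj_transpose_trace_annihilator[OF K] by blast
    then have z_l: "z = mat (cnj l)"
      by (simp add: vec_eq_iff mat_def) (metis (mono_tags, lifting) complex_cnj_cnj complex_cnj_zero
          vec_lambda_beta)
    have "trace z = of_nat CARD('m) * cnj l"
      by (simp add: z_l trace_def mat_def)
    moreover have "trace X0 = 0" and "trace k = 0"
      using X0 k K_sl by (auto simp: sl_def)
    ultimately have "cnj l = 0"
      using X0_eq by (simp add: trace_add)
    then have "z = 0"
      by (simp add: z_l)
    then show "X0 \<in> K"
      using X0_eq k by simp
  qed
qed (use K_sl in blast)

section \<open>Irreducible families of rank-one idempotents\<close>

locale irreducible_projection_family =
  fixes P :: "'i set" and v \<phi> :: "'i \<Rightarrow> complex^'m"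
  assumes normalized: "i \<in> P \<Longrightarrow> cdot (\<phi> i) (v i) = 1"
    and nonempty: "P \<noteq> {}"
    and irreducible: "csubspace U \<Longrightarrow> (\<And>i u. i \<in> P \<Longrightarrow> u \<in> U \<Longrightarrow> cdot (\<phi> i) u *s v i \<in> U)
      \<Longrightarrow> U = {0} \<or> U = UNIV"
begin

definition proj :: "'i \<Rightarrow> complex^'m^'m" where
  "proj i = outer (v i) (\<phi> i)"

lemma proj_idem: "i \<in> P \<Longrightarrow> proj i ** proj i = proj i"
  by (simp add: proj_def outer_mult_outer normalized)

lemma v_nonzero: "i \<in> P \<Longrightarrow> v i \<noteq> 0"
  using normalized by force

lemma form_vanishing_on_closed_family:
  assumes "j0 \<in> J" "J \<subseteq> P"
    and closed: "\<And>j k. j \<in> J \<Longrightarrow> k \<in> P \<Longrightarrow> cdot (\<phi> k) (v j) \<noteq> 0 \<Longrightarrow> k \<in> J"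
    and vanishing: "\<And>j. j \<in> J \<Longrightarrow> cdot \<omega> (v j) = 0"
  shows "\<omega> = 0"
proof -
  \<comment> \<open>the span of the v j, j \<in> J, written as a double annihilator\<close>
  define U where "U = {u. \<forall>\<omega>. (\<forall>j\<in>J. cdot \<omega> (v j) = 0) \<longrightarrow> cdot \<omega> u = 0}"
  have "csubspace U"
    unfolding csubspace_def U_def by (auto simp: cdot_add_right cdot_scale_right)
  moreover have "cdot (\<phi> k) u *s v k \<in> U" if k: "k \<in> P" and u: "u \<in> U" for k u
  proof (cases "k \<in> J")
    case True
    then show ?thesis
      by (simp add: U_def cdot_scale_right)
  next
    case False
    then have "\<forall>j\<in>J. cdot (\<phi> k) (v j) = 0"
      using closed k by blast
    then have "cdot (\<phi> k) u = 0"
      using u by (simp add: U_def)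
    then show ?thesis
      by (simp add: U_def cdot_scale_right)
  qed
  ultimately have "U = {0} \<or> U = UNIV"
    using irreducible by blast
  moreover have "v j0 \<in> U" and "v j0 \<noteq> 0"
    using assms(1,2) v_nonzero by (auto simp: U_def)
  ultimately have "U = UNIV"
    by auto
  then show ?thesis
    using vanishing by (auto simp: U_def intro: cdot_left_eq_zero)
qed

lemma vector_killed_by_closed_family:
  assumes "j0 \<in> J" "J \<subseteq> P"
    and closed: "\<And>j k. j \<in> J \<Longrightarrow> k \<in> P \<Longrightarrow> cdot (\<phi> j) (v k) \<noteq> 0 \<Longrightarrow> k \<in> J"
    and killed: "\<And>j. j \<in> J \<Longrightarrow> cdot (\<phi> j) w = 0"
  shows "w = 0"
proof -
  define N where "N = {u. \<forall>j\<in>J. cdot (\<phi> j) u = 0}"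
  have "csubspace N"
    unfolding csubspace_def N_def by (auto simp: cdot_add_right cdot_scale_right)
  moreover have "cdot (\<phi> k) u *s v k \<in> N" if k: "k \<in> P" and u: "u \<in> N" for k u
  proof (cases "k \<in> J")
    case True
    then show ?thesis
      using u by (simp add: N_def cdot_scale_right)
  next
    case False
    then show ?thesis
      using closed k by (auto simp: N_def cdot_scale_right)
  qed
  ultimately have "N = {0} \<or> N = UNIV"
    using irreducible by blast
  moreover have "v j0 \<notin> N"
    using assms(1,2) normalized by (force simp: N_def)
  ultimately show ?thesis
    using killed by (auto simp: N_def)
qed

lemma commuting_is_scalar:
  assumes commutes: "\<And>i. i \<in> P \<Longrightarrow> proj i ** Y = Y ** proj i"
  shows "\<exists>l. Y = mat l"
proof -
  have Y_proj: "Y *v (cdot (\<phi> k) u *s v k) = cdot (\<phi> k) (Y *v u) *s v k" if "k \<in> P" for k u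
    using commutes[OF that] matrix_vector_mul_assoc[of Y "proj k" u]
      matrix_vector_mul_assoc[of "proj k" Y u]
    by (simp add: proj_def outer_matrix_vector_mult)
  obtain i0 where i0: "i0 \<in> P"
    using nonempty by auto
  define l where "l = cdot (\<phi> i0) (Y *v v i0)"
  define U where "U = {u. Y *v u = l *s u}"
  have "csubspace U"
    unfolding csubspace_def U_def
    by (auto simp: matrix_vector_right_distrib vector_add_ldistrib vector_scalar_commute
        vector_smult_assoc mult.commute)
  moreover have "cdot (\<phi> k) u *s v k \<in> U" if "k \<in> P" and "u \<in> U" for k u
    using that Y_proj by (simp add: U_def cdot_scale_right)
  ultimately have "U = {0} \<or> U = UNIV"
    using irreducible by blast
  moreover have "v i0 \<in> U"
    using Y_proj[OF i0, of "v i0"] by (simp add: U_def normalized[OF i0] l_def)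
  ultimately have "U = UNIV"
    using v_nonzero[OF i0] by auto
  then have "Y *v x = mat l *v x" for x
    by (auto simp: U_def mat_matrix_vector_mult)
  then show ?thesis
    using matrix_eq by blast
qed

end

locale ad_stable_subspace = irreducible_projection_family P v \<phi>
  for P :: "'i set" and v \<phi> :: "'i \<Rightarrow> complex^'m" +
  fixes K :: "(complex^'m^'m) set"
  assumes subspace: "cmat_subspace K"
    and traceless: "K \<subseteq> sl"
    and ad_proj_closed: "i \<in> P \<Longrightarrow> X \<in> K \<Longrightarrow> mbracket (proj i) X \<in> K"
    and proj_brackets: "i \<in> P \<Longrightarrow> j \<in> P \<Longrightarrow> mbracket (proj i) (proj j) \<in> K"
begin

lemma annihilator_ad_proj_closed:
  assumes i: "i \<in> P" and Y: "Y \<in> trace_annihilator K"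
  shows "mbracket (proj i) Y \<in> trace_annihilator K"
  unfolding trace_annihilator_def
proof (intro CollectI ballI)
  fix X assume "X \<in> K"
  then have "trace (Y ** mbracket (proj i) X) = 0"
    using Y ad_proj_closed[OF i] by (simp add: trace_annihilator_def)
  moreover have "trace (proj i ** Y ** X) = trace (Y ** X ** proj i)"
    by (metis trace_mul_sym matrix_mul_assoc)
  then have "trace (mbracket (proj i) Y ** X) = - trace (Y ** mbracket (proj i) X)"
    by (simp add: mbracket_def matrix_mult_diff_left matrix_mult_diff_right trace_sub
        matrix_mul_assoc)
  ultimately show "trace (mbracket (proj i) Y ** X) = 0"
    by simp
qed

lemma annihilator_compressions:
  assumes i: "i \<in> P" and Y: "Y \<in> trace_annihilator K"
  shows "proj i ** Y - proj i ** Y ** proj i \<in> trace_annihilator K"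
    and "Y ** proj i - proj i ** Y ** proj i \<in> trace_annihilator K"
proof -
  let ?ad = "mbracket (proj i)"
  have idem: "proj i ** proj i = proj i" "Z ** proj i ** proj i = Z ** proj i" for Z
    using proj_idem[OF i] by (auto simp flip: matrix_mul_assoc)
  have ad: "?ad Y \<in> trace_annihilator K" "?ad (?ad Y) \<in> trace_annihilator K"
    using annihilator_ad_proj_closed[OF i] Y by blast+
  \<comment> \<open>for idempotent p, [p, [p, Y]] = p Y - 2 p Y p + Y p\<close>
  have "cscale (1/2) (?ad (?ad Y) + ?ad Y) = proj i ** Y - proj i ** Y ** proj i"
    and "cscale (1/2) (?ad (?ad Y) - ?ad Y) = Y ** proj i - proj i ** Y ** proj i"
    by (simp_all add: mbracket_def matrix_mult_diff_left matrix_mult_diff_right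
        matrix_mul_assoc idem) (simp_all add: vec_eq_iff)
  moreover have "cscale (1/2) (?ad (?ad Y) + ?ad Y) \<in> trace_annihilator K"
    and "cscale (1/2) (?ad (?ad Y) - ?ad Y) \<in> trace_annihilator K"
    using ad cmat_subspace_trace_annihilator[of K] cmat_subspace_diff[of "trace_annihilator K"]
    by (simp_all add: cmat_subspace_def)
  ultimately show "proj i ** Y - proj i ** Y ** proj i \<in> trace_annihilator K"
    and "Y ** proj i - proj i ** Y ** proj i \<in> trace_annihilator K"
    by simp_all
qed

lemma annihilator_outer_form_eq_zero:
  assumes i: "i \<in> P" and "outer (v i) \<psi> \<in> trace_annihilator K" and "cdot \<psi> (v i) = 0"
  shows "\<psi> = 0"
proof -
  define J where "J = {j \<in> P. outer (v j) \<psi> \<in> trace_annihilator K \<and> cdot \<psi> (v j) = 0}"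
  have closed: "k \<in> J" if j: "j \<in> J" and k: "k \<in> P" and c: "cdot (\<phi> k) (v j) \<noteq> 0" for j k
  proof -
    from j have jP: "j \<in> P" and O: "outer (v j) \<psi> \<in> trace_annihilator K"
      and z: "cdot \<psi> (v j) = 0"
      by (auto simp: J_def)
    have "trace (outer (v j) \<psi> ** mbracket (proj j) (proj k)) = 0"
      using O proj_brackets[OF jP k] by (simp add: trace_annihilator_def)
    moreover have "outer (v j) \<psi> ** mbracket (proj j) (proj k)
        = - cscale (cdot \<psi> (v k) * cdot (\<phi> k) (v j)) (outer (v j) (\<phi> j))"
      by (simp add: mbracket_def matrix_mult_diff_left matrix_mul_assoc)
        (simp add: proj_def outer_mult_outer z cscale_mult_left)
    ultimately have "cdot \<psi> (v k) * cdot (\<phi> k) (v j) = 0"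
      using normalized[OF jP] by (simp add: trace_uminus trace_cscale trace_outer)
    then have zk: "cdot \<psi> (v k) = 0"
      using c by simp
    have "mbracket (proj k) (outer (v j) \<psi>) = cscale (cdot (\<phi> k) (v j)) (outer (v k) \<psi>)"
      by (simp add: mbracket_def proj_def outer_mult_outer zk)
    then have "cscale (cdot (\<phi> k) (v j)) (outer (v k) \<psi>) \<in> trace_annihilator K"
      using annihilator_ad_proj_closed[OF k O] by simp
    then have "outer (v k) \<psi> \<in> trace_annihilator K"
      by (rule cscale_cancel[OF cmat_subspace_trace_annihilator]) (use c in simp)
    then show ?thesis
      using k zk by (simp add: J_def)
  qed
  show ?thesis
    by (rule form_vanishing_on_closed_family[of i J, OF _ _ closed])
      (use assms in \<open>auto simp: J_def\<close>)
qed

lemma annihilator_outer_vector_eq_zero: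
  assumes i: "i \<in> P" and "outer w (\<phi> i) \<in> trace_annihilator K" and "cdot (\<phi> i) w = 0"
  shows "w = 0"
proof -
  define J where "J = {j \<in> P. outer w (\<phi> j) \<in> trace_annihilator K \<and> cdot (\<phi> j) w = 0}"
  have closed: "k \<in> J" if j: "j \<in> J" and k: "k \<in> P" and c: "cdot (\<phi> j) (v k) \<noteq> 0" for j k
  proof -
    from j have jP: "j \<in> P" and O: "outer w (\<phi> j) \<in> trace_annihilator K"
      and z: "cdot (\<phi> j) w = 0"
      by (auto simp: J_def)
    have "trace (outer w (\<phi> j) ** mbracket (proj j) (proj k)) = 0"
      using O proj_brackets[OF jP k] by (simp add: trace_annihilator_def)
    moreover have "outer w (\<phi> j) ** mbracket (proj j) (proj k)
        = cscale (cdot (\<phi> j) (v k)) (outer w (\<phi> k))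
          - cscale (cdot (\<phi> j) (v k) * cdot (\<phi> k) (v j)) (outer w (\<phi> j))"
      by (simp add: mbracket_def matrix_mult_diff_left matrix_mul_assoc)
        (simp add: proj_def outer_mult_outer normalized[OF jP] cscale_mult_left)
    ultimately have "cdot (\<phi> j) (v k) * cdot (\<phi> k) w = 0"
      using z by (simp add: trace_sub trace_cscale trace_outer)
    then have zk: "cdot (\<phi> k) w = 0"
      using c by simp
    have "mbracket (proj k) (outer w (\<phi> j)) = cscale (- cdot (\<phi> j) (v k)) (outer w (\<phi> k))"
      by (simp add: mbracket_def proj_def outer_mult_outer zk vec_eq_iff)
    then have "cscale (- cdot (\<phi> j) (v k)) (outer w (\<phi> k)) \<in> trace_annihilator K"
      using annihilator_ad_proj_closed[OF k O] by simp
    then have "outer w (\<phi> k) \<in> trace_annihilator K"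
      by (rule cscale_cancel[OF cmat_subspace_trace_annihilator]) (use c in simp)
    then show ?thesis
      using k zk by (simp add: J_def)
  qed
  show ?thesis
    by (rule vector_killed_by_closed_family[of i J, OF _ _ closed])
      (use assms in \<open>auto simp: J_def\<close>)
qed

lemma annihilator_commutes_proj:
  assumes i: "i \<in> P" and Y: "Y \<in> trace_annihilator K"
  shows "proj i ** Y = Y ** proj i"
proof -
  define c where "c = cdot (\<phi> i v* Y) (v i)"
  have left: "proj i ** Y = outer (v i) (\<phi> i v* Y)"
    by (simp add: proj_def outer_mult_matrix)
  have right: "Y ** proj i = outer (Y *v v i) (\<phi> i)"
    by (simp add: proj_def matrix_mult_outer)
  have middle: "proj i ** Y ** proj i = outer (v i) (c *s \<phi> i)"
    "proj i ** Y ** proj i = outer (c *s v i) (\<phi> i)"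
    unfolding left by (simp_all add: proj_def outer_mult_outer c_def outer_scale_left outer_scale_right)
  have "outer (v i) (\<phi> i v* Y - c *s \<phi> i) \<in> trace_annihilator K"
    using annihilator_compressions(1)[OF i Y, unfolded middle(1), unfolded left]
    by (simp add: outer_diff_right)
  moreover have "cdot (\<phi> i v* Y - c *s \<phi> i) (v i) = 0"
    by (simp add: cdot_diff_left cdot_scale_left c_def normalized[OF i])
  ultimately have form: "\<phi> i v* Y - c *s \<phi> i = 0"
    by (rule annihilator_outer_form_eq_zero[OF i])
  have "outer (Y *v v i - c *s v i) (\<phi> i) \<in> trace_annihilator K"
    using annihilator_compressions(2)[OF i Y, unfolded middle(2), unfolded right]
    by (simp add: outer_diff_left)
  moreover have "cdot (\<phi> i) (Y *v v i - c *s v i) = 0"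
    by (simp add: cdot_diff_right cdot_scale_right c_def normalized[OF i] cdot_vector_matrix_mult)
  ultimately have vector: "Y *v v i - c *s v i = 0"
    by (rule annihilator_outer_vector_eq_zero[OF i])
  show ?thesis
    using form vector by (simp add: left right outer_scale_left outer_scale_right)
qed

theorem eq_sl: "K = sl"
  using subspace traceless
proof (rule cmat_subspace_eq_sl)
  fix Y assume "Y \<in> trace_annihilator K"
  then show "\<exists>l. Y = mat l"
    using annihilator_commutes_proj commuting_is_scalar by blast
qed

end

section \<open>Reflection representations and the group algebra\<close>

lemma is_reflection_rank_one:
  fixes A :: "complex^'m^'m"
  assumes "is_reflection A"
  obtains v a where "A = mat 1 - cscale 2 (outer v a)" and "cdot a v = 1"
proof -
  from assms obtain H where AA: "A ** A = mat 1" and A1: "A \<noteq> mat 1" and "chyperplane H"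
    and fix_H: "\<forall>x\<in>H. A *v x = x"
    by (auto simp: is_reflection_def)
  then obtain a where "a \<noteq> 0" and H: "H = {x. cdot a x = 0}"
    by (auto simp: chyperplane_def cdot_def)
  then obtain k where ak: "a$k \<noteq> 0"
    by (metis vec_eq_iff zero_index)
  define e where "e = axis k (1 / a$k)"
  have ae: "cdot a e = 1"
    using ak by (simp add: e_def cdot_axis)
  define M where "M = mat 1 - A"
  \<comment> \<open>M kills H = ker a, so it has rank one\<close>
  have M: "M = outer (M *v e) a"
  proof (rule matrix_eq[THEN iffD2], intro allI)
    fix x
    have "x - cdot a x *s e \<in> H"
      by (simp add: H cdot_diff_right cdot_scale_right ae)
    then have "M *v (x - cdot a x *s e) = 0"
      using fix_H by (simp add: M_def matrix_vector_mult_diff_rdistrib)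
    then show "M *v x = outer (M *v e) a *v x"
      by (simp add: matrix_vector_mult_diff_distrib vector_scalar_commute outer_matrix_vector_mult)
  qed
  define w where "w = M *v e"
  have "M ** M = cscale 2 M"
    by (simp add: M_def matrix_mult_diff_left matrix_mult_diff_right AA) (simp add: vec_eq_iff)
  then have "cscale (cdot a w) (outer w a) = cscale 2 (outer w a)"
    using M by (metis outer_mult_outer w_def)
  moreover obtain i j where "outer w a $ i $ j \<noteq> 0"
    using A1 M by (metis M_def w_def vec_eq_iff zero_index right_minus_eq)
  ultimately have "cdot a w = 2"
    by (metis cscale_component mult_cancel_right)
  show thesis
  proof
    have "A = mat 1 - M"
      by (simp add: M_def)
    then show "A = mat 1 - cscale 2 (outer ((1/2) *s w) a)"
      using M by (simp add: outer_scale_left flip: w_def)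
    show "cdot a ((1/2) *s w) = 1"
      using \<open>cdot a w = 2\<close> by (simp add: cdot_scale_right)
  qed
qed

lemma tensor_ext_component:
  "tensor_ext W R \<eta> f $ i $ j = (\<Sum>w\<in>W. f w * \<eta> w * R w $ i $ j)"
  by (simp add: tensor_ext_def)

lemma tensor_ext_add:
  "tensor_ext W R \<eta> (\<lambda>w. f w + g w) = tensor_ext W R \<eta> f + tensor_ext W R \<eta> g"
  by (simp add: vec_eq_iff tensor_ext_component algebra_simps sum.distrib)

lemma tensor_ext_diff:
  "tensor_ext W R \<eta> (\<lambda>w. f w - g w) = tensor_ext W R \<eta> f - tensor_ext W R \<eta> g"
  by (simp add: vec_eq_iff tensor_ext_component algebra_simps sum_subtractf)

lemma tensor_ext_scale:
  "tensor_ext W R \<eta> (\<lambda>w. c * f w) = cscale c (tensor_ext W R \<eta> f)"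
  by (simp add: vec_eq_iff tensor_ext_component algebra_simps sum_distrib_left)

lemma tensor_ext_zero: "tensor_ext W R \<eta> (\<lambda>w. 0) = 0"
  by (simp add: vec_eq_iff tensor_ext_component)

lemma tensor_ext_delta:
  assumes "finite W" and "s \<in> W"
  shows "tensor_ext W R \<eta> (delta s) = cscale (\<eta> s) (R s)"
proof -
  have "tensor_ext W R \<eta> (delta s) $ i $ j = \<eta> s * R s $ i $ j" for i j
  proof -
    have eq: "(\<lambda>w. delta s w * \<eta> w * R w $ i $ j) = (\<lambda>w. if w = s then \<eta> s * R s $ i $ j else 0)"
      by (auto simp: delta_def)
    show ?thesis
      unfolding tensor_ext_component by (subst eq) (simp add: assms)
  qed
  then show ?thesis
    by (simp add: vec_eq_iff)
qed

lemma tensor_ext_gmult: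
  assumes fin: "finite W" and "matrix_group W" and "representation W R" and "sign_char W \<eta>"
  shows "tensor_ext W R \<eta> (gmult W f g) = tensor_ext W R \<eta> f ** tensor_ext W R \<eta> g"
proof -
  have closed: "\<forall>u\<in>W. \<forall>v\<in>W. u ** v \<in> W"
    and R_mult: "\<forall>u\<in>W. \<forall>v\<in>W. R (u ** v) = R u ** R v"
    and \<eta>_mult: "\<forall>u\<in>W. \<forall>v\<in>W. \<eta> (u ** v) = \<eta> u * \<eta> v"
    using assms(2-4) by (auto simp: matrix_group_def representation_def sign_char_def)
  let ?T = "tensor_ext W R \<eta>"
  have "?T (gmult W f g) $ i $ j = (?T f ** ?T g) $ i $ j" for i j
  proof -
    have "?T (gmult W f g) $ i $ j
        = (\<Sum>w\<in>W. \<Sum>u\<in>W. \<Sum>v\<in>W. if u ** v = w then f u * g v * \<eta> w * R w $ i $ j else 0)"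
      unfolding tensor_ext_component
      by (rule sum.cong) (auto simp: gmult_def sum_distrib_right intro!: sum.cong)
    also have "\<dots> = (\<Sum>u\<in>W. \<Sum>v\<in>W. \<Sum>w\<in>W.
        if u ** v = w then f u * g v * \<eta> w * R w $ i $ j else 0)"
      by (subst sum.swap) (rule sum.cong, simp, rule sum.swap)
    also have "\<dots> = (\<Sum>u\<in>W. \<Sum>v\<in>W. f u * g v * \<eta> (u ** v) * R (u ** v) $ i $ j)"
      using closed fin by (auto intro!: sum.cong)
    also have "\<dots> = (\<Sum>u\<in>W. \<Sum>v\<in>W. \<Sum>k\<in>UNIV.
        (f u * \<eta> u * R u $ i $ k) * (g v * \<eta> v * R v $ k $ j))"
      using R_mult \<eta>_mult
      by (auto intro!: sum.cong simp: matrix_matrix_mult_component sum_distrib_left algebra_simps)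
    also have "\<dots> = (\<Sum>k\<in>UNIV. \<Sum>u\<in>W. \<Sum>v\<in>W.
        (f u * \<eta> u * R u $ i $ k) * (g v * \<eta> v * R v $ k $ j))"
      by (subst sum.swap) (rule sum.cong, simp, rule sum.swap)
    also have "\<dots> = (?T f ** ?T g) $ i $ j"
      by (simp add: matrix_matrix_mult_component tensor_ext_component sum_product)
    finally show ?thesis .
  qed
  then show ?thesis
    by (simp add: vec_eq_iff)
qed

lemma tensor_ext_gbracket:
  assumes "finite W" and "matrix_group W" and "representation W R" and "sign_char W \<eta>"
  shows "tensor_ext W R \<eta> (gbracket W f g) = mbracket (tensor_ext W R \<eta> f) (tensor_ext W R \<eta> g)"
  unfolding gbracket_def mbracket_def by (simp add: tensor_ext_diff tensor_ext_gmult[OF assms])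

lemma lie_H'_subset_lie_H: "lie_H' W \<subseteq> lie_H W"
proof
  fix x assume "x \<in> lie_H' W"
  then show "x \<in> lie_H W"
    by (induction rule: lie_H'.induct) (auto intro: lie_H.intros)
qed

lemma cmat_subspace_tensor_ext_lie_H': "cmat_subspace (tensor_ext W R \<eta> ` lie_H' W)"
  unfolding cmat_subspace_def
proof (intro conjI ballI allI)
  show "0 \<in> tensor_ext W R \<eta> ` lie_H' W"
    using lie_H'.H'_zero by (metis tensor_ext_zero image_eqI)
next
  fix X Y assume "X \<in> tensor_ext W R \<eta> ` lie_H' W" "Y \<in> tensor_ext W R \<eta> ` lie_H' W"
  then show "X + Y \<in> tensor_ext W R \<eta> ` lie_H' W"
    by (auto simp flip: tensor_ext_add intro: lie_H'.H'_add)
next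
  fix c X assume "X \<in> tensor_ext W R \<eta> ` lie_H' W"
  then show "cscale c X \<in> tensor_ext W R \<eta> ` lie_H' W"
    by (auto simp flip: tensor_ext_scale intro: lie_H'.H'_smult)
qed

lemma tensor_ext_lie_H'_traceless:
  assumes "finite W" and "matrix_group W" and "representation W R" and "sign_char W \<eta>"
  shows "tensor_ext W R \<eta> ` lie_H' W \<subseteq> sl"
proof (clarsimp simp: sl_def)
  fix x assume "x \<in> lie_H' W"
  then show "trace (tensor_ext W R \<eta> x) = 0"
  proof (induction rule: lie_H'.induct)
    case (H'_bracket x y)
    then show ?case
      by (simp add: tensor_ext_gbracket[OF assms] trace_mbracket)
  qed (simp_all add: tensor_ext_zero tensor_ext_add tensor_ext_scale trace_add trace_cscale
      trace_0[simplified])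
qed

lemma representation_one:
  assumes "representation W R" and "mat 1 \<in> W"
  shows "R (mat 1) = mat 1"
proof -
  obtain B where B: "R (mat 1) ** B = mat 1"
    using assms by (auto simp: representation_def invertible_def)
  have "R (mat 1) = R (mat 1) ** R (mat 1)"
    using assms by (metis representation_def matrix_mul_lid)
  then have "R (mat 1) ** B = R (mat 1) ** (R (mat 1) ** B)"
    by (metis matrix_mul_assoc)
  then show ?thesis
    using B by simp
qed

lemma exists_proper_csubspace:
  assumes "CARD('m::finite) \<ge> 2"
  shows "\<exists>U :: (complex^'m) set. csubspace U \<and> U \<noteq> {0} \<and> U \<noteq> UNIV"
proof -
  obtain a b :: 'm where "a \<noteq> b"
    using assms card_le_Suc0_iff_eq[of "UNIV :: 'm set"] by force
  define U where "U = {x :: complex^'m. \<forall>i. i \<noteq> a \<longrightarrow> x$i = 0}"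
  have "csubspace U" and "axis a 1 \<in> U" and "axis b 1 \<notin> U"
    using \<open>a \<noteq> b\<close> by (auto simp: csubspace_def U_def axis_def)
  moreover have "axis a (1::complex) \<noteq> 0"
    by (simp add: axis_eq_0_iff)
  ultimately show ?thesis
    by blast
qed

lemma gen_by_invariant:
  assumes "R (mat 1) = mat 1" and "\<And>s x. s \<in> S \<Longrightarrow> x \<in> gen_by S \<Longrightarrow> R (s ** x) = R s ** R x"
    and "\<And>s u. s \<in> S \<Longrightarrow> u \<in> U \<Longrightarrow> R s *v u \<in> U"
    and "w \<in> gen_by S" and "u \<in> U"
  shows "R w *v u \<in> U"
  using assms(4,5)
proof (induction arbitrary: u rule: gen_by.induct)
  case gen_one
  then show ?case
    using assms(1) by simp
next
  case (gen_mult s x)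
  then show ?case
    using assms(2,3) by (simp flip: matrix_vector_mul_assoc)
qed

lemma reflection_representation_projection_irreducible:
  fixes R :: "('n::finite) cmat \<Rightarrow> ('m::finite) cmat"
  assumes W: "irreducible_reflection_group W" and R: "reflection_representation W R"
    and P: "P = {s \<in> reflections W. R s \<noteq> mat 1}"
    and R_P: "\<And>s. s \<in> P \<Longrightarrow> R s = mat 1 - cscale 2 (outer (v s) (\<phi> s))"
    and U: "csubspace U" and invariant: "\<And>s u. s \<in> P \<Longrightarrow> u \<in> U \<Longrightarrow> cdot (\<phi> s) u *s v s \<in> U"
  shows "U = {0} \<or> U = UNIV"
proof -
  have W_gen: "W = gen_by (reflections W)" and "mat 1 \<in> W"
    and R_mult: "\<forall>x\<in>W. \<forall>y\<in>W. R (x ** y) = R x ** R y"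
    using W R by (auto simp: irreducible_reflection_group_def matrix_group_def
        reflection_representation_def representation_def)
  have R_one: "R (mat 1) = mat 1"
    using R representation_one \<open>mat 1 \<in> W\<close> by (auto simp: reflection_representation_def)
  have R_hom: "R (s ** x) = R s ** R x" if "s \<in> reflections W" "x \<in> gen_by (reflections W)"
    for s x
  proof -
    have "s \<in> W" and "x \<in> W"
      using that W_gen by (auto simp: reflections_def simp del: gen_by.intros)
    then show ?thesis
      using R_mult by blast
  qed
  have reflection_invariant: "R s *v u \<in> U" if "s \<in> reflections W" "u \<in> U" for s u
  proof (cases "s \<in> P")
    case True
    then have "R s *v u = u + (-2) *s (cdot (\<phi> s) u *s v s)"
      by (simp add: R_P matrix_vector_mult_diff_rdistrib cscale_matrix_vector_mult
          outer_matrix_vector_mult vector_smult_assoc vec_eq_iff)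
    then show ?thesis
      using U invariant[OF True] that(2) unfolding csubspace_def by metis
  next
    case False
    then show ?thesis
      using that P by simp
  qed
  have "R w *v u \<in> U" if "w \<in> W" "u \<in> U" for w u
  proof -
    have "w \<in> gen_by (reflections W)"
      using that(1) W_gen by blast
    then show ?thesis
      using gen_by_invariant[OF R_one R_hom reflection_invariant] that(2) by blast
  qed
  then show ?thesis
    using R U by (auto simp: reflection_representation_def irreducible_on_def)
qed

lemma reflection_representation_projection_family:
  fixes R :: "('n::finite) cmat \<Rightarrow> ('m::finite) cmat"
  assumes W: "irreducible_reflection_group W" and R: "reflection_representation W R"
    and P: "P = {s \<in> reflections W. R s \<noteq> mat 1}"
    and R_P: "\<And>s. s \<in> P \<Longrightarrow> R s = mat 1 - cscale 2 (outer (v s) (\<phi> s))"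
    and normalized: "\<And>s. s \<in> P \<Longrightarrow> cdot (\<phi> s) (v s) = 1"
  shows "irreducible_projection_family P v \<phi>"
proof
  show "P \<noteq> {}"
  proof
    assume "P = {}"
    then have "U = {0} \<or> U = UNIV" if "csubspace U" for U :: "(complex^'m) set"
      using reflection_representation_projection_irreducible[OF W R P R_P that] by blast
    then show False
      using exists_proper_csubspace R by (metis reflection_representation_def)
  qed
next
  show "U = {0} \<or> U = UNIV"
    if "csubspace U" "\<And>i u. i \<in> P \<Longrightarrow> u \<in> U \<Longrightarrow> cdot (\<phi> i) u *s v i \<in> U" for U
    by (rule reflection_representation_projection_irreducible[OF W R P R_P that])
qed (rule normalized)

lemma tensor_ext_lie_H'_ad_stable:
  fixes R :: "('n::finite) cmat \<Rightarrow> ('m::finite) cmat"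
  assumes W: "irreducible_reflection_group W" and R: "reflection_representation W R"
    and \<eta>: "sign_char W \<eta>"
    and P: "P = {s \<in> reflections W. R s \<noteq> mat 1}"
    and R_P: "\<And>s. s \<in> P \<Longrightarrow> R s = mat 1 - cscale 2 (outer (v s) (\<phi> s))"
    and normalized: "\<And>s. s \<in> P \<Longrightarrow> cdot (\<phi> s) (v s) = 1"
  shows "ad_stable_subspace P v \<phi> (tensor_ext W R \<eta> ` lie_H' W)"
proof -
  interpret irreducible_projection_family P v \<phi>
    by (rule reflection_representation_projection_family[OF W R P R_P normalized])
  have hom: "finite W" "matrix_group W" "representation W R" "sign_char W \<eta>"
    using W R \<eta> by (auto simp: irreducible_reflection_group_def reflection_representation_def)
  let ?T = "tensor_ext W R \<eta>"
  have P_lie_H: "delta s \<in> lie_H W" and \<eta>_nonzero: "\<eta> s \<noteq> 0" if "s \<in> P" for s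
    using that \<eta> by (force simp: P reflections_def sign_char_def intro: lie_H.H_gen)+
  have T_delta: "?T (delta s) = cscale (\<eta> s) (mat 1 - cscale 2 (proj s))" if "s \<in> P" for s
  proof -
    have "s \<in> W"
      using that by (simp add: P reflections_def)
    then show ?thesis
      by (simp add: tensor_ext_delta[OF hom(1)] R_P[OF that] proj_def)
  qed
  show ?thesis
  proof (unfold_locales)
    fix i X assume i: "i \<in> P" and "X \<in> ?T ` lie_H' W"
    then obtain x where x: "x \<in> lie_H' W" and X: "X = ?T x"
      by blast
    have "?T (gbracket W (delta i) x) \<in> ?T ` lie_H' W"
      using P_lie_H[OF i] x lie_H'_subset_lie_H by (blast intro: lie_H'.H'_bracket)
    then have "cscale (-2 * \<eta> i) (mbracket (proj i) X) \<in> ?T ` lie_H' W"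
      by (simp add: tensor_ext_gbracket[OF hom] T_delta[OF i] mbracket_scaled_reflection_left X)
    then show "mbracket (proj i) X \<in> ?T ` lie_H' W"
      by (rule cscale_cancel[OF cmat_subspace_tensor_ext_lie_H']) (use \<eta>_nonzero[OF i] in simp)
  next
    fix i j assume i: "i \<in> P" and j: "j \<in> P"
    have "?T (gbracket W (delta i) (delta j)) \<in> ?T ` lie_H' W"
      using P_lie_H[OF i] P_lie_H[OF j] by (blast intro: lie_H'.H'_bracket)
    then have "cscale (4 * \<eta> i * \<eta> j) (mbracket (proj i) (proj j)) \<in> ?T ` lie_H' W"
      by (simp add: tensor_ext_gbracket[OF hom] T_delta[OF i] T_delta[OF j]
          mbracket_scaled_reflection_left mbracket_scaled_reflection_right mult_ac)
    then show "mbracket (proj i) (proj j) \<in> ?T ` lie_H' W"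
      by (rule cscale_cancel[OF cmat_subspace_tensor_ext_lie_H'])
        (use \<eta>_nonzero[OF i] \<eta>_nonzero[OF j] in simp)
  qed (use cmat_subspace_tensor_ext_lie_H' tensor_ext_lie_H'_traceless[OF hom] in auto)
qed

theorem proposition2p9:
  fixes W :: "('n::finite) cmat set"
    and R :: "'n cmat \<Rightarrow> ('m::finite) cmat"
    and \<eta> :: "'n cmat \<Rightarrow> complex"
  assumes "irreducible_reflection_group W"
    and "reflection_representation W R"
    and "sign_char W \<eta>"
  shows "tensor_ext W R \<eta> ` lie_H' W = sl"
proof -
  define P where "P = {s \<in> reflections W. R s \<noteq> mat 1}"
  have "\<exists>v \<phi>. R s = mat 1 - cscale 2 (outer v \<phi>) \<and> cdot \<phi> v = 1" if "s \<in> P" for s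
  proof -
    have "is_reflection (R s)"
      using that assms(2) by (auto simp: P_def reflection_representation_def)
    then show ?thesis
      by (rule is_reflection_rank_one) blast
  qed
  then obtain v \<phi> where "\<And>s. s \<in> P \<Longrightarrow> R s = mat 1 - cscale 2 (outer (v s) (\<phi> s))"
    and "\<And>s. s \<in> P \<Longrightarrow> cdot (\<phi> s) (v s) = 1"
    by metis
  then interpret ad_stable_subspace P v \<phi> "tensor_ext W R \<eta> ` lie_H' W"
    using assms P_def by (intro tensor_ext_lie_H'_ad_stable) auto
  show ?thesis
    by (rule eq_sl)
qed

end
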